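(* Let $S_{r,N}$ be a nontrivial atomic exponential Puiseux semiring. For $x\in S_{r,N}$ and $m\in\mathbb{N}$ let $R_x(r^{s_m})=\mathsf{Z}(x)\cap(r^{s_m}+\mathsf{Z}(S_{r,N}))$ (the factorizations of $x$ in which the atom $r^{s_m}$ occurs). Then: (1) $\mathrm{Betti}(S_{r,N})=\{\mathsf{n}(r)^{\delta_n}r^{s_n}: n\in\mathbb{N}\}$; (2) if $x=\mathsf{n}(r)^{\delta_n}r^{s_n}$ for some $n\in\mathbb{N}$, then the set of $\mathcal{R}$-classes of $\mathsf{Z}(x)$ is exactly $\{R_x(r^{s_n}),R_x(r^{s_{n+1}})\}$.
   Context: $\mathbb{N}=\{0,1,2,\dots\}$. A numerical monoid $N$ is an additive submonoid of $\mathbb{N}$ with finite complement in $\mathbb{N}$. For $r\in\mathbb{Q}_{>0}$ write $r=\mathsf{n}(r)/\mathsf{d}(r)$ in lowest terms. The exponential Puiseux semiring $S_{r,N}$ is the additive submonoid of $\mathbb{Q}_{\ge0}$ generated by $\{r^k:k\in N\}$; it is nontrivial if $r\notin\mathbb{N}$, and then it is atomic iff $\mathsf{n}(r)>1$, with atoms $r^s$, $s\in N$. Let $s_0<s_1<\cdots$ be the elements of $N$ in increasing order and $\delta_n=s_{n+1}-s_n$. For an atomic monoid $M$, $\mathsf{Z}(M)$ is the free commutative monoid on the atoms, $\pi:\mathsf{Z}(M)\to M$ the evaluation homomorphism, $\mathsf{Z}(x)=\pi^{-1}(x)$. For factorizations $z=\sum\alpha_a a$, $z'=\sum\beta_a a$,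 $\gcd(z,z')=\sum\min(\alpha_a,\beta_a)a$. Two factorizations $z,z'\in\mathsf{Z}(x)$ are $\mathcal{R}$-related if there is a chain $z=z_1,\dots,z_n=z'$ in $\mathsf{Z}(x)$ with $\gcd(z_i,z_{i+1})$ nonzero (nonempty) for all $i$. An element $x$ is a Betti element if $\mathsf{Z}(x)$ has more than one $\mathcal{R}$-class; $\mathrm{Betti}(M)$ is the set of Betti elements. *)

theory Defs
  imports Complex_Main "HOL-Library.Multiset" "HOL-Library.Infinite_Set"
begin

definition numerical_monoid :: "nat set \<Rightarrow> bool" where
  "numerical_monoid N \<longleftrightarrow> 0 \<in> N \<and> (\<forall>a\<in>N. \<forall>b\<in>N. a + b \<in> N) \<and> finite (UNIV - N)"

definition numer :: "rat \<Rightarrow> int" where "numer r = fst (quotient_of r)"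
definition denom :: "rat \<Rightarrow> int" where "denom r = snd (quotient_of r)"

definition exp_puiseux :: "rat \<Rightarrow> nat set \<Rightarrow> rat set" where
  "exp_puiseux r N = {sum_mset z | z. set_mset z \<subseteq> (\<lambda>k. r ^ k) ` N}"

definition atoms :: "rat set \<Rightarrow> rat set" where
  "atoms M = {a \<in> M. a \<noteq> 0 \<and> (\<forall>b\<in>M. \<forall>c\<in>M. a = b + c \<longrightarrow> b = 0 \<or> c = 0)}"

definition factorization_monoid :: "rat set \<Rightarrow> rat multiset set" where
  "factorization_monoid M = {z. set_mset z \<subseteq> atoms M}"

definition factorizations :: "rat set \<Rightarrow> rat \<Rightarrow> rat multiset set" where
  "factorizations M x = {z \<in> factorization_monoid M. sum_mset z = x}"

definition R_step :: "rat set \<Rightarrow> rat \<Rightarrow> (rat multiset \<times> rat multiset) set" where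
  "R_step M x = {(z, z'). z \<in> factorizations M x \<and> z' \<in> factorizations M x \<and> z \<inter># z' \<noteq> {#}}"

definition R_related :: "rat set \<Rightarrow> rat \<Rightarrow> rat multiset \<Rightarrow> rat multiset \<Rightarrow> bool" where
  "R_related M x z z' \<longleftrightarrow> z \<in> factorizations M x \<and> z' \<in> factorizations M x \<and> (z, z') \<in> (R_step M x)\<^sup>*"

definition R_class :: "rat set \<Rightarrow> rat \<Rightarrow> rat multiset \<Rightarrow> rat multiset set" where
  "R_class M x z = {z'. R_related M x z z'}"

definition R_classes :: "rat set \<Rightarrow> rat \<Rightarrow> rat multiset set set" where
  "R_classes M x = R_class M x ` factorizations M x"

definition Betti :: "rat set \<Rightarrow> rat set" where
  "Betti M = {x \<in> M. \<exists>C1\<in>R_classes M x. \<exists>C2\<in>R_classes M x. C1 \<noteq> C2}"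

definition R_atom :: "rat set \<Rightarrow> rat \<Rightarrow> rat \<Rightarrow> rat multiset set" where
  "R_atom M x a = factorizations M x \<inter> {add_mset a w | w. w \<in> factorization_monoid M}"

end

theory Submission
  imports Defs
begin

text \<open>Write r = \<alpha>/\<beta> in lowest terms and x(n) = \<alpha>^(s(n+1) - s(n)) r^s(n) = \<beta>^(s(n+1) - s(n)) r^s(n+1).
  Multiplying by a power of \<beta> turns an equation between sums of powers of r into one
  between integers \<Sum> \<alpha>^t \<beta>^(K - t), where the coprimality of \<alpha> and \<beta> controls
  divisibility. For x(n) this shows that a factorization either uses only exponents \<le> s(n)
  and contains r^s(n), or uses only exponents \<ge> s(n+1) and contains r^s(n+1); factorizations
  of different kinds share no atom, so these are the two R-classes. For any other element,
  take two factorizations without common atom: the largest exponent e = s(j+1) occurring in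
  them occurs in only one of them, and there at least \<beta>^(s(j+1) - s(j)) times. Trading these
  copies of r^e for \<alpha>^(s(j+1) - s(j)) copies of r^s(j) (both sum to x(j)) yields an adjacent
  factorization of smaller weight \<Sum> \<alpha>^t, and induction on the weight connects the two.\<close>

lemma dvd_sum_mset_image:
  fixes d :: "'b::comm_semiring_1"
  assumes "\<And>t. t \<in># E \<Longrightarrow> d dvd f t"
  shows "d dvd (\<Sum>t\<in>#E. f t)"
  using assms by (induction E) auto

lemma member_le_sum_mset: "t \<in># E \<Longrightarrow> t \<le> sum_mset (E :: nat multiset)"
  by (metis le_add1 sum_mset.remove)

lemma inter_mset_nonempty: "x \<in># A \<Longrightarrow> x \<in># B \<Longrightarrow> A \<inter># B \<noteq> {#}"
  by (metis disjunct_not_in)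

lemma ex_image_mset_eq_if_subset_image:
  assumes "set_mset z \<subseteq> f ` A"
  shows "\<exists>E. set_mset E \<subseteq> A \<and> z = image_mset f E"
proof (intro exI conjI)
  show "set_mset (image_mset (inv_into A f) z) \<subseteq> A"
    using assms by (auto intro: inv_into_into)
  have "image_mset f (image_mset (inv_into A f) z) = image_mset id z"
    unfolding image_mset.compositionality
    by (rule image_mset_cong) (use assms in \<open>auto intro: f_inv_into_f\<close>)
  then show "z = image_mset f (image_mset (inv_into A f) z)"
    by simp
qed

lemma not_dvd_power_if_coprime:
  fixes a b :: "'a::semiring_gcd"
  assumes "coprime a b" "\<not> is_unit b"
  shows "\<not> b dvd a ^ k"
  using assms by (metis coprime_commute coprime_common_divisor coprime_power_right_iff dvd_refl)

lemma not_power_Suc_dvd_if_coprime: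
  fixes a b :: int
  assumes "coprime a b" "a > 1"
  shows "\<not> a ^ Suc k dvd a ^ k * b ^ m"
proof
  assume "a ^ Suc k dvd a ^ k * b ^ m"
  then have "a ^ k * a dvd a ^ k * b ^ m"
    by (simp add: mult.commute)
  then have "a dvd b ^ m"
    using assms(2) by simp
  then show False
    using not_dvd_power_if_coprime[of b a m] assms by (simp add: coprime_commute)
qed

lemma rat_eq_numer_div_denom: "r = of_int (numer r) / of_int (denom r)"
  using quotient_of_div[of r "numer r" "denom r"] by (simp add: numer_def denom_def)

lemma denom_pos: "denom r > 0"
  using quotient_of_denom_pos'[of r] by (simp add: denom_def)

lemma coprime_numer_denom: "coprime (numer r) (denom r)"
  using quotient_of_coprime[of r "numer r" "denom r"] by (simp add: numer_def denom_def)

lemma denom_gt_1_if_not_Nats: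
  assumes "r \<ge> 0" "r \<notin> \<nat>"
  shows "denom r > 1"
proof (rule ccontr)
  assume "\<not> denom r > 1"
  then have "denom r = 1"
    using denom_pos[of r] by simp
  then have "r = of_int (numer r)"
    using rat_eq_numer_div_denom[of r] by simp
  then have "r = of_nat (nat (numer r))"
    using assms(1) by simp
  then show False
    using assms(2) by (metis of_nat_in_Nats)
qed

lemma numerical_monoid_infinite: "numerical_monoid N \<Longrightarrow> infinite N"
  unfolding numerical_monoid_def by (metis finite_Diff2 infinite_UNIV_nat)

lemma enumerate_0_numerical_monoid: "numerical_monoid N \<Longrightarrow> enumerate N 0 = 0"
  unfolding numerical_monoid_def by (simp add: enumerate_0)

lemma enumerate_gap:
  fixes S :: "nat set"
  assumes "infinite S" "t \<in> S"
  shows "t \<le> enumerate S n \<or> enumerate S (Suc n) \<le> t"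
  using enumerate_Suc''[OF assms(1), of n] assms(2) by (metis (mono_tags) Least_le not_le)

lemma R_step_sym: "(z, w) \<in> R_step M x \<Longrightarrow> (w, z) \<in> R_step M x"
  unfolding R_step_def by (auto simp: subset_mset.inf_commute)

lemma R_atom_iff:
  assumes "q \<in> atoms M"
  shows "z \<in> R_atom M x q \<longleftrightarrow> z \<in> factorizations M x \<and> q \<in># z"
proof
  assume "z \<in> factorizations M x \<and> q \<in># z"
  moreover have "set_mset (z - {#q#}) \<subseteq> set_mset z"
    by (auto dest: in_diffD)
  ultimately have "z - {#q#} \<in> factorization_monoid M" "z = add_mset q (z - {#q#})"
    by (auto simp: factorizations_def factorization_monoid_def)
  with \<open>z \<in> factorizations M x \<and> q \<in># z\<close> show "z \<in> R_atom M x q"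
    unfolding R_atom_def by blast
qed (auto simp: R_atom_def)

lemma R_class_eq_R_atom:
  assumes q: "q \<in> atoms M" and z: "z \<in> factorizations M x" "q \<in># z"
    and invariant: "\<And>u w. (u, w) \<in> R_step M x \<Longrightarrow> q \<in># u \<Longrightarrow> q \<in># w"
  shows "R_class M x z = R_atom M x q"
proof (intro set_eqI iffI)
  fix w assume "w \<in> R_class M x z"
  then have "w \<in> factorizations M x" "(z, w) \<in> (R_step M x)\<^sup>*"
    unfolding R_class_def R_related_def by auto
  moreover from \<open>(z, w) \<in> (R_step M x)\<^sup>*\<close> have "q \<in># w"
  proof (induction rule: rtrancl_induct)
    case (step u w)
    then show ?case
      using invariant by blast
  qed (rule z(2))
  ultimately show "w \<in> R_atom M x q"
    using R_atom_iff[OF q] by blast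
next
  fix w assume "w \<in> R_atom M x q"
  then have "w \<in> factorizations M x" "q \<in># w"
    using R_atom_iff[OF q] by auto
  moreover have "z \<inter># w \<noteq> {#}"
    using z(2) \<open>q \<in># w\<close> by (rule inter_mset_nonempty)
  ultimately have "(z, w) \<in> R_step M x"
    using z(1) unfolding R_step_def by simp
  with z \<open>w \<in> factorizations M x\<close> show "w \<in> R_class M x z"
    unfolding R_class_def R_related_def by auto
qed

lemma not_Betti_if_R_connected:
  assumes "\<And>z w. z \<in> factorizations M x \<Longrightarrow> w \<in> factorizations M x \<Longrightarrow> (z, w) \<in> (R_step M x)\<^sup>*"
  shows "x \<notin> Betti M"
proof -
  have "R_class M x z = factorizations M x" if "z \<in> factorizations M x" for z
    using assms that unfolding R_class_def R_related_def by auto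
  then show ?thesis
    unfolding Betti_def R_classes_def by auto
qed

locale atomic_exp_puiseux =
  fixes r :: rat and N :: "nat set"
  assumes numerical_monoid: "numerical_monoid N"
    and r_pos: "r > 0" and r_not_Nats: "r \<notin> \<nat>" and numer_gt_1: "numer r > 1"
begin

abbreviation \<alpha> :: int where "\<alpha> \<equiv> numer r"
abbreviation \<beta> :: int where "\<beta> \<equiv> denom r"
abbreviation s :: "nat \<Rightarrow> nat" where "s \<equiv> enumerate N"
abbreviation M :: "rat set" where "M \<equiv> exp_puiseux r N"

text \<open>Factorizations are handled through their multisets of exponents (the atoms are the
  powers \<open>r ^ t\<close>, \<open>t \<in> N\<close>, see \<open>atoms_eq\<close>); for exponents at most \<open>K\<close>, \<open>cleared K E\<close> is
  \<open>\<beta> ^ K\<close> times the value of \<open>E\<close>.\<close>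

abbreviation fact_of :: "nat multiset \<Rightarrow> rat multiset" where
  "fact_of E \<equiv> image_mset (\<lambda>t. r ^ t) E"

abbreviation eval_exps :: "nat multiset \<Rightarrow> rat" where
  "eval_exps E \<equiv> \<Sum>t\<in>#E. r ^ t"

abbreviation cleared :: "nat \<Rightarrow> nat multiset \<Rightarrow> int" where
  "cleared K E \<equiv> \<Sum>t\<in>#E. \<alpha> ^ t * \<beta> ^ (K - t)"

abbreviation betti_elt :: "nat \<Rightarrow> rat" where
  "betti_elt n \<equiv> of_int \<alpha> ^ (s (Suc n) - s n) * r ^ s n"

lemma denom_gt_1: "\<beta> > 1"
  using denom_gt_1_if_not_Nats r_pos r_not_Nats by simp

lemma coprime_\<alpha>_\<beta>: "coprime \<alpha> \<beta>"
  by (rule coprime_numer_denom)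

lemma r_power: "r ^ t = of_int (\<alpha> ^ t) / of_int (\<beta> ^ t)"
  by (subst rat_eq_numer_div_denom) (simp add: power_divide)

lemma r_power_inject: "r ^ t = r ^ u \<longleftrightarrow> t = u"
proof (rule power_inject_exp'[OF _ r_pos])
  show "r \<noteq> 1"
    using r_not_Nats by auto
qed

lemma r_power_in_fact_of_iff: "r ^ t \<in># fact_of E \<longleftrightarrow> t \<in># E"
  using r_power_inject by auto

lemma N_infinite: "infinite N"
  using numerical_monoid by (rule numerical_monoid_infinite)

lemma s_in_N: "s n \<in> N"
  using N_infinite by (rule enumerate_in_set)

lemma s_less_iff [simp]: "s m < s n \<longleftrightarrow> m < n"
  using N_infinite by simp

lemma s_le_iff [simp]: "s m \<le> s n \<longleftrightarrow> m \<le> n"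
  using N_infinite by simp

lemma s_inject [simp]: "s m = s n \<longleftrightarrow> m = n"
  using s_less_iff by (metis less_irrefl linorder_neq_iff)

lemma s_0: "s 0 = 0"
  using numerical_monoid by (rule enumerate_0_numerical_monoid)

lemma s_surj: "t \<in> N \<Longrightarrow> \<exists>n. s n = t"
  using N_infinite by (rule enumerate_Ex)

lemma s_gap: "t \<in> N \<Longrightarrow> t \<le> s n \<or> s (Suc n) \<le> t"
  using N_infinite by (rule enumerate_gap)

lemma betti_elt_eq_denom_power: "betti_elt n = of_int \<beta> ^ (s (Suc n) - s n) * r ^ s (Suc n)"
proof -
  have "s (Suc n) = s n + (s (Suc n) - s n)"
    by (simp add: less_imp_le)
  then have "r ^ s (Suc n) = r ^ s n * (of_int \<alpha> / of_int \<beta>) ^ (s (Suc n) - s n)"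
    by (metis power_add rat_eq_numer_div_denom)
  then show ?thesis
    using denom_pos[of r] by (simp add: power_divide)
qed

lemma betti_elt_cleared:
  assumes "s n \<le> K"
  shows "betti_elt n * of_int \<beta> ^ K = of_int (\<alpha> ^ s (Suc n) * \<beta> ^ (K - s n))"
proof -
  have "s (Suc n) = (s (Suc n) - s n) + s n"
    by (simp add: less_imp_le)
  then have "betti_elt n = of_int (\<alpha> ^ s (Suc n)) / of_int (\<beta> ^ s n)"
    by (metis (no_types, lifting) of_int_power power_add r_power times_divide_eq_right)
  moreover have "(of_int \<beta> ^ K :: rat) = of_int \<beta> ^ s n * of_int \<beta> ^ (K - s n)"
    using assms by (simp add: power_add[symmetric])
  ultimately show ?thesis
    using denom_pos[of r] by simp
qed

lemma eval_exps_nonneg: "eval_exps E \<ge> 0"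
  using r_pos by (induction E) (simp_all add: less_imp_le)

lemma eval_exps_pos: "E \<noteq> {#} \<Longrightarrow> eval_exps E > 0"
proof (induction E)
  case (add t E)
  then show ?case
    using eval_exps_nonneg[of E] r_pos by (simp add: add_pos_nonneg)
qed simp

lemma r_power_le_eval_exps: "t \<in># E \<Longrightarrow> r ^ t \<le> eval_exps E"
  by (metis eval_exps_nonneg le_add_same_cancel1 multi_member_split sum_mset.add_mset image_mset_add_mset)

lemma cleared_eq:
  assumes "\<forall>t\<in>#E. t \<le> K"
  shows "of_int (cleared K E) = eval_exps E * of_int \<beta> ^ K"
  using assms
proof (induction E)
  case (add t E)
  then have "of_int \<beta> ^ K = (of_int \<beta> ^ t * of_int \<beta> ^ (K - t) :: rat)"
    by (simp add: power_add[symmetric])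
  then have "r ^ t * of_int \<beta> ^ K = of_int (\<alpha> ^ t * \<beta> ^ (K - t))"
    using denom_pos[of r] by (simp add: r_power)
  then show ?case
    using add by (simp add: distrib_right)
qed simp

lemma eval_exps_in_M: "set_mset E \<subseteq> N \<Longrightarrow> eval_exps E \<in> M"
  unfolding exp_puiseux_def by (intro CollectI exI[of _ "fact_of E"]) auto

lemma M_elem_eq_eval_exps: "q \<in> M \<Longrightarrow> \<exists>E. set_mset E \<subseteq> N \<and> q = eval_exps E"
proof -
  assume "q \<in> M"
  then obtain z where "set_mset z \<subseteq> (\<lambda>t. r ^ t) ` N" "q = sum_mset z"
    unfolding exp_puiseux_def by blast
  then show ?thesis
    using ex_image_mset_eq_if_subset_image by metis
qed

lemma cleared_ne_if_exponents_less:
  assumes "\<forall>t\<in>#E. t < K"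
  shows "cleared K E \<noteq> \<alpha> ^ k"
proof
  assume "cleared K E = \<alpha> ^ k"
  moreover have "\<beta> dvd cleared K E"
    by (rule dvd_sum_mset_image) (use assms in simp)
  moreover have "\<not> is_unit \<beta>"
    using denom_gt_1 by simp
  ultimately show False
    using not_dvd_power_if_coprime[OF coprime_\<alpha>_\<beta>] by metis
qed

lemma cleared_ne_if_exponents_greater:
  assumes "\<forall>t\<in>#E. p < t"
  shows "cleared K E \<noteq> \<alpha> ^ p * \<beta> ^ m"
proof
  assume "cleared K E = \<alpha> ^ p * \<beta> ^ m"
  moreover have "\<alpha> ^ Suc p dvd cleared K E"
  proof (rule dvd_sum_mset_image)
    fix t assume "t \<in># E"
    then have "\<alpha> ^ Suc p dvd \<alpha> ^ t"
      using assms by (intro le_imp_power_dvd) (simp add: Suc_le_eq)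
    then show "\<alpha> ^ Suc p dvd \<alpha> ^ t * \<beta> ^ (K - t)"
      by simp
  qed
  ultimately show False
    using not_power_Suc_dvd_if_coprime[OF coprime_\<alpha>_\<beta> numer_gt_1] by metis
qed

lemma eval_exps_ne_power_if_exponents_less:
  assumes "\<forall>t\<in>#E. t < t0"
  shows "eval_exps E \<noteq> r ^ t0"
proof
  assume E: "eval_exps E = r ^ t0"
  have "of_int (cleared t0 E) = eval_exps E * of_int \<beta> ^ t0"
    by (rule cleared_eq) (use assms less_imp_le in blast)
  also have "\<dots> = of_int (cleared t0 {#t0#})"
    using E cleared_eq[of "{#t0#}" t0] by simp
  finally have "cleared t0 E = \<alpha> ^ t0"
    by (simp only: of_int_eq_iff) simp
  with cleared_ne_if_exponents_less[OF assms] show False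
    by blast
qed

lemma eval_exps_ne_power_if_exponents_greater:
  assumes "\<forall>t\<in>#E. t0 < t"
  shows "eval_exps E \<noteq> r ^ t0"
proof
  assume E: "eval_exps E = r ^ t0"
  define K where "K = t0 + sum_mset E"
  have "of_int (cleared K E) = eval_exps E * of_int \<beta> ^ K"
    by (rule cleared_eq) (use member_le_sum_mset K_def in fastforce)
  also have "\<dots> = of_int (cleared K {#t0#})"
    using E cleared_eq[of "{#t0#}" K] K_def by simp
  finally have "cleared K E = \<alpha> ^ t0 * \<beta> ^ (K - t0)"
    by (simp only: of_int_eq_iff) simp
  with cleared_ne_if_exponents_greater[OF assms] show False
    by blast
qed

lemma member_if_eval_exps_eq_power:
  assumes E: "eval_exps E = r ^ t0"
  shows "t0 \<in># E"
proof (rule ccontr)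
  assume "t0 \<notin># E"
  then have less: "r ^ t < r ^ t0" if "t \<in># E" for t
    using r_power_le_eval_exps[OF that] E r_power_inject that by (metis order.not_eq_order_implies_strict)
  show False
  proof (cases "r > 1")
    case True
    then have "\<forall>t\<in>#E. t < t0"
      using less by simp
    then show False
      using eval_exps_ne_power_if_exponents_less E by blast
  next
    case False
    then have "r < 1"
      using r_power_inject[of 1 0] by fastforce
    then have "\<forall>t\<in>#E. t0 < t"
      using less r_pos by simp
    then show False
      using eval_exps_ne_power_if_exponents_greater E by blast
  qed
qed

lemma eval_exps_eq_power_iff: "eval_exps E = r ^ t \<longleftrightarrow> E = {#t#}"
proof
  assume E: "eval_exps E = r ^ t"
  then obtain E' where E': "E = add_mset t E'"
    using member_if_eval_exps_eq_power multi_member_split by metis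
  then have "eval_exps E' = 0"
    using E by simp
  then show "E = {#t#}"
    using E' eval_exps_pos by fastforce
qed simp

lemma r_power_in_atoms:
  assumes "t \<in> N"
  shows "r ^ t \<in> atoms M"
  unfolding atoms_def
proof (intro CollectI conjI ballI impI)
  show "r ^ t \<in> M"
    using eval_exps_in_M[of "{#t#}"] assms by simp
  show "r ^ t \<noteq> 0"
    using r_pos by simp
  fix u v assume "u \<in> M" "v \<in> M" "r ^ t = u + v"
  then obtain E1 E2 where E12: "u = eval_exps E1" "v = eval_exps E2"
    using M_elem_eq_eval_exps by metis
  with \<open>r ^ t = u + v\<close> have "E1 + E2 = {#t#}"
    using eval_exps_eq_power_iff[of "E1 + E2" t] by simp
  then show "u = 0 \<or> v = 0"
    using E12 by (auto simp: union_is_single)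
qed

lemma atoms_eq: "atoms M = (\<lambda>t. r ^ t) ` N"
proof
  show "atoms M \<subseteq> (\<lambda>t. r ^ t) ` N"
  proof
    fix q assume q: "q \<in> atoms M"
    then obtain E where E: "set_mset E \<subseteq> N" "q = eval_exps E"
      using M_elem_eq_eval_exps unfolding atoms_def by blast
    moreover from q E have "E \<noteq> {#}"
      unfolding atoms_def by auto
    then obtain t E' where tE': "E = add_mset t E'"
      by (metis multiset_cases)
    have "E' = {#}"
    proof (rule ccontr)
      assume "E' \<noteq> {#}"
      have "r ^ t \<in> M" "eval_exps E' \<in> M"
        using eval_exps_in_M[of "{#t#}"] eval_exps_in_M[of E'] E(1) tE' by auto
      moreover have "q = r ^ t + eval_exps E'"
        using E(2) tE' by simp
      ultimately show False
        using q r_pos eval_exps_pos[OF \<open>E' \<noteq> {#}\<close>] unfolding atoms_def by fastforce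
    qed
    ultimately show "q \<in> (\<lambda>t. r ^ t) ` N"
      using tE' by auto
  qed
qed (use r_power_in_atoms in blast)

lemma factorizations_iff:
  "z \<in> factorizations M x \<longleftrightarrow> (\<exists>E. set_mset E \<subseteq> N \<and> z = fact_of E \<and> eval_exps E = x)"
proof
  assume "z \<in> factorizations M x"
  then have "set_mset z \<subseteq> (\<lambda>t. r ^ t) ` N" "sum_mset z = x"
    unfolding factorizations_def factorization_monoid_def atoms_eq by auto
  then show "\<exists>E. set_mset E \<subseteq> N \<and> z = fact_of E \<and> eval_exps E = x"
    using ex_image_mset_eq_if_subset_image by metis
qed (force simp: factorizations_def factorization_monoid_def atoms_eq)

lemma cleared_shift:
  assumes "\<forall>t\<in>#E. t \<le> K" "K \<le> L"
  shows "cleared L E = cleared K E * \<beta> ^ (L - K)"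
  using assms
proof (induction E)
  case (add t E)
  then have "\<beta> ^ (L - t) = \<beta> ^ (K - t) * \<beta> ^ (L - K)"
    by (simp add: power_add[symmetric])
  with add show ?case
    by (simp add: distrib_right)
qed simp

lemma betti_elt_low_part_dvd:
  assumes E: "set_mset E \<subseteq> N" "eval_exps E = betti_elt n"
  shows "\<alpha> ^ s (Suc n) dvd cleared (s n) (filter_mset (\<lambda>t. t \<le> s n) E)"
proof -
  define p where "p = s (Suc n)"
  define Elo where "Elo = filter_mset (\<lambda>t. t \<le> s n) E"
  define Ehi where "Ehi = filter_mset (\<lambda>t. \<not> t \<le> s n) E"
  define K where "K = p + sum_mset E"
  have "s n \<le> K"
    unfolding K_def p_def by (simp add: trans_le_add1)
  have "\<forall>t\<in>#E. t \<le> K"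
    using member_le_sum_mset unfolding K_def by (simp add: trans_le_add2)
  then have "of_int (cleared K E) = (of_int (\<alpha> ^ p * \<beta> ^ (K - s n)) :: rat)"
    using cleared_eq E(2) betti_elt_cleared[OF \<open>s n \<le> K\<close>] p_def by simp
  then have "cleared K E = \<alpha> ^ p * \<beta> ^ (K - s n)"
    by (simp only: of_int_eq_iff)
  moreover have "E = Elo + Ehi"
    unfolding Elo_def Ehi_def by simp
  then have "cleared K E = cleared K Elo + cleared K Ehi"
    by simp
  moreover have "cleared K Elo = cleared (s n) Elo * \<beta> ^ (K - s n)"
    using \<open>s n \<le> K\<close> by (intro cleared_shift) (auto simp: Elo_def)
  ultimately have low: "cleared (s n) Elo * \<beta> ^ (K - s n) = \<alpha> ^ p * \<beta> ^ (K - s n) - cleared K Ehi"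
    by linarith
  have "\<alpha> ^ p dvd cleared K Ehi"
  proof (rule dvd_sum_mset_image)
    fix t assume "t \<in># Ehi"
    then have "t \<in> N" "s n < t"
      using E(1) unfolding Ehi_def by auto
    then have "p \<le> t"
      using s_gap[of t n] unfolding p_def by linarith
    then show "\<alpha> ^ p dvd \<alpha> ^ t * \<beta> ^ (K - t)"
      by (simp add: le_imp_power_dvd)
  qed
  then have "\<alpha> ^ p dvd cleared (s n) Elo * \<beta> ^ (K - s n)"
    unfolding low by simp
  moreover have "coprime (\<alpha> ^ p) (\<beta> ^ (K - s n))"
    using coprime_\<alpha>_\<beta> by simp
  ultimately show ?thesis
    unfolding Elo_def p_def using coprime_dvd_mult_left_iff by blast
qed

text \<open>The exponents at most \<open>s n\<close> contribute a positive multiple of \<open>\<alpha> ^ s (Suc n)\<close> to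
  \<open>\<beta> ^ s n * betti_elt n = \<alpha> ^ s (Suc n)\<close>, hence all of it.\<close>

lemma betti_elt_exponents_le_if_some_le:
  assumes E: "set_mset E \<subseteq> N" "eval_exps E = betti_elt n" and t0: "t0 \<in># E" "t0 \<le> s n"
  shows "set_mset E \<subseteq> {..s n}"
proof -
  define Elo where "Elo = filter_mset (\<lambda>t. t \<le> s n) E"
  define Ehi where "Ehi = filter_mset (\<lambda>t. \<not> t \<le> s n) E"
  define A where "A = cleared (s n) Elo"
  have E_split: "E = Elo + Ehi"
    unfolding Elo_def Ehi_def by simp
  have A: "of_int A = eval_exps Elo * of_int \<beta> ^ s n"
    unfolding A_def by (rule cleared_eq) (simp add: Elo_def)
  have "\<alpha> ^ s (Suc n) dvd A"
    unfolding A_def Elo_def using E by (rule betti_elt_low_part_dvd)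
  moreover have "A > 0"
  proof -
    have "Elo \<noteq> {#}"
      using t0 unfolding Elo_def by auto
    then have "(of_int A :: rat) > 0"
      unfolding A using eval_exps_pos denom_pos[of r] by simp
    then show ?thesis
      by simp
  qed
  moreover have "of_int A \<le> betti_elt n * of_int \<beta> ^ s n"
    using A E denom_pos[of r] E_split eval_exps_nonneg[of Ehi] by (simp add: mult_right_mono)
  then have "A \<le> \<alpha> ^ s (Suc n)"
    using betti_elt_cleared[of n "s n"] by simp
  ultimately have "of_int A = betti_elt n * of_int \<beta> ^ s n"
    using betti_elt_cleared[of n "s n"] by (simp add: order_antisym zdvd_imp_le)
  then have "eval_exps Elo = eval_exps E"
    using A E(2) denom_pos[of r] by simp
  then have "Ehi = {#}"
    using E_split eval_exps_pos by fastforce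
  then show ?thesis
    unfolding Ehi_def by auto
qed

lemma betti_elt_exponents_contain_s:
  assumes E: "set_mset E \<subseteq> {..s n}" "eval_exps E = betti_elt n"
  shows "s n \<in># E"
proof (rule ccontr)
  assume "s n \<notin># E"
  then have "\<forall>t\<in>#E. t < s n"
    using E(1) by (metis atMost_iff le_neq_implies_less subsetD)
  moreover have "of_int (cleared (s n) E) = (of_int (\<alpha> ^ s (Suc n)) :: rat)"
    using cleared_eq[of E "s n"] E betti_elt_cleared[of n "s n"] by auto
  then have "cleared (s n) E = \<alpha> ^ s (Suc n)"
    by (simp only: of_int_eq_iff)
  ultimately show False
    using cleared_ne_if_exponents_less by blast
qed

lemma betti_elt_exponents_contain_s_Suc:
  assumes E: "set_mset E \<subseteq> N" "eval_exps E = betti_elt n" and above: "\<forall>t\<in>#E. s n < t"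
  shows "s (Suc n) \<in># E"
proof (rule ccontr)
  assume "s (Suc n) \<notin># E"
  have "\<forall>t\<in>#E. s (Suc n) < t"
  proof
    fix t assume "t \<in># E"
    then have "s (Suc n) \<le> t"
      using E(1) above s_gap[of t n] by fastforce
    moreover have "t \<noteq> s (Suc n)"
      using \<open>t \<in># E\<close> \<open>s (Suc n) \<notin># E\<close> by auto
    ultimately show "s (Suc n) < t"
      by simp
  qed
  define K where "K = s (Suc n) + sum_mset E"
  have "s n \<le> K"
    unfolding K_def by (simp add: trans_le_add1)
  have "\<forall>t\<in>#E. t \<le> K"
    using member_le_sum_mset unfolding K_def by (simp add: trans_le_add2)
  then have "of_int (cleared K E) = (of_int (\<alpha> ^ s (Suc n) * \<beta> ^ (K - s n)) :: rat)"
    using cleared_eq E(2) betti_elt_cleared[OF \<open>s n \<le> K\<close>] by simp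
  then have "cleared K E = \<alpha> ^ s (Suc n) * \<beta> ^ (K - s n)"
    by (simp only: of_int_eq_iff)
  with cleared_ne_if_exponents_greater[OF \<open>\<forall>t\<in>#E. s (Suc n) < t\<close>] show False
    by blast
qed

lemma betti_elt_exponents_cases:
  assumes E: "set_mset E \<subseteq> N" "eval_exps E = betti_elt n"
  shows "(s n \<in># E \<and> set_mset E \<subseteq> {..s n}) \<or> (s (Suc n) \<in># E \<and> set_mset E \<subseteq> {s (Suc n)..})"
proof (cases "\<exists>t\<in>#E. t \<le> s n")
  case True
  then have "set_mset E \<subseteq> {..s n}"
    using betti_elt_exponents_le_if_some_le[OF E] by blast
  then show ?thesis
    using betti_elt_exponents_contain_s E(2) by blast
next
  case False
  then have "s (Suc n) \<in># E"
    using betti_elt_exponents_contain_s_Suc[OF E] by (simp add: not_le)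
  moreover have "set_mset E \<subseteq> {s (Suc n)..}"
    using False E(1) s_gap by fastforce
  ultimately show ?thesis
    by blast
qed

lemma betti_elt_factorization_cases:
  assumes "z \<in> factorizations M (betti_elt n)"
  obtains E where "z = fact_of E" "s n \<in># E" "set_mset E \<subseteq> {..s n}"
    | E where "z = fact_of E" "s (Suc n) \<in># E" "set_mset E \<subseteq> {s (Suc n)..}"
  using assms betti_elt_exponents_cases factorizations_iff by metis

lemma betti_elt_factorization_contains:
  assumes "z \<in> factorizations M (betti_elt n)"
  shows "r ^ s n \<in># z \<or> r ^ s (Suc n) \<in># z"
  using assms by (cases rule: betti_elt_factorization_cases) auto

lemma betti_elt_factorizations_disjoint:
  assumes z: "z \<in> factorizations M (betti_elt n)" "r ^ s n \<in># z"
    and w: "w \<in> factorizations M (betti_elt n)" "r ^ s (Suc n) \<in># w"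
  shows "z \<inter># w = {#}"
proof -
  obtain E where E: "z = fact_of E" "set_mset E \<subseteq> {..s n}"
    using z(1) by (cases rule: betti_elt_factorization_cases) (use z(2) r_power_in_fact_of_iff in force)+
  obtain E' where E': "w = fact_of E'" "set_mset E' \<subseteq> {s (Suc n)..}"
    using w(1) by (cases rule: betti_elt_factorization_cases) (use w(2) r_power_in_fact_of_iff in force)+
  have "q \<notin># z \<or> q \<notin># w" for q
  proof (rule ccontr)
    assume "\<not> (q \<notin># z \<or> q \<notin># w)"
    then obtain t t' where "t \<in># E" "t' \<in># E'" "r ^ t = r ^ t'"
      using E(1) E'(1) by auto
    then have "t = t'" "t \<le> s n" "s (Suc n) \<le> t'"
      using E(2) E'(2) r_power_inject by auto
    moreover have "s n < s (Suc n)"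
      by simp
    ultimately show False
      by linarith
  qed
  then show ?thesis
    by (simp add: disjunct_not_in)
qed

lemma R_step_betti_elt_preserves_atom:
  assumes q: "q \<in> {r ^ s n, r ^ s (Suc n)}" and uw: "(u, w) \<in> R_step M (betti_elt n)" and "q \<in># u"
  shows "q \<in># w"
proof (rule ccontr)
  assume "q \<notin># w"
  from uw have u: "u \<in> factorizations M (betti_elt n)" and w: "w \<in> factorizations M (betti_elt n)"
    and "u \<inter># w \<noteq> {#}"
    unfolding R_step_def by auto
  moreover have "r ^ s n \<in># u \<and> r ^ s (Suc n) \<in># w \<or> r ^ s (Suc n) \<in># u \<and> r ^ s n \<in># w"
    using q \<open>q \<in># u\<close> \<open>q \<notin># w\<close> betti_elt_factorization_contains[OF w] by auto
  ultimately show False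
    using betti_elt_factorizations_disjoint[OF u _ w] betti_elt_factorizations_disjoint[OF w _ u]
    by (auto simp: subset_mset.inf_commute)
qed

lemma R_class_betti_elt:
  assumes "z \<in> factorizations M (betti_elt n)" "q \<in> {r ^ s n, r ^ s (Suc n)}" "q \<in># z"
  shows "R_class M (betti_elt n) z = R_atom M (betti_elt n) q"
proof (rule R_class_eq_R_atom[OF _ assms(1,3)])
  show "q \<in> atoms M"
    using assms(2) r_power_in_atoms s_in_N by auto
  fix u w assume "(u, w) \<in> R_step M (betti_elt n)" "q \<in># u"
  then show "q \<in># w"
    by (rule R_step_betti_elt_preserves_atom[OF assms(2)])
qed

lemma replicate_factorizations_betti_elt:
  "fact_of (replicate_mset (nat \<alpha> ^ (s (Suc n) - s n)) (s n)) \<in> factorizations M (betti_elt n)"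
  "fact_of (replicate_mset (nat \<beta> ^ (s (Suc n) - s n)) (s (Suc n))) \<in> factorizations M (betti_elt n)"
  using numer_gt_1 denom_gt_1 s_in_N
  by (auto simp: factorizations_iff betti_elt_eq_denom_power[of n]
      intro!: exI[of _ "replicate_mset _ _"])

lemma R_classes_betti_elt:
  "R_classes M (betti_elt n) = {R_atom M (betti_elt n) (r ^ s n), R_atom M (betti_elt n) (r ^ s (Suc n))}"
proof (intro set_eqI iffI)
  fix C assume "C \<in> R_classes M (betti_elt n)"
  then obtain z where "z \<in> factorizations M (betti_elt n)" "C = R_class M (betti_elt n) z"
    unfolding R_classes_def by blast
  then show "C \<in> {R_atom M (betti_elt n) (r ^ s n), R_atom M (betti_elt n) (r ^ s (Suc n))}"
    using betti_elt_factorization_contains[of z n] R_class_betti_elt[of z n] by auto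
next
  fix C assume C: "C \<in> {R_atom M (betti_elt n) (r ^ s n), R_atom M (betti_elt n) (r ^ s (Suc n))}"
  have "R_atom M (betti_elt n) (r ^ s n) =
      R_class M (betti_elt n) (fact_of (replicate_mset (nat \<alpha> ^ (s (Suc n) - s n)) (s n)))"
    using R_class_betti_elt[OF replicate_factorizations_betti_elt(1)] numer_gt_1 by simp
  moreover have "R_atom M (betti_elt n) (r ^ s (Suc n)) =
      R_class M (betti_elt n) (fact_of (replicate_mset (nat \<beta> ^ (s (Suc n) - s n)) (s (Suc n))))"
    using R_class_betti_elt[OF replicate_factorizations_betti_elt(2)] denom_gt_1 by simp
  ultimately show "C \<in> R_classes M (betti_elt n)"
    using C replicate_factorizations_betti_elt unfolding R_classes_def by auto
qed

lemma betti_elt_in_Betti: "betti_elt n \<in> Betti M"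
proof -
  define z where "z = fact_of (replicate_mset (nat \<alpha> ^ (s (Suc n) - s n)) (s n))"
  have z: "z \<in> factorizations M (betti_elt n)"
    unfolding z_def by (rule replicate_factorizations_betti_elt(1))
  then obtain E where "set_mset E \<subseteq> N" "betti_elt n = eval_exps E"
    unfolding factorizations_iff by metis
  then have "betti_elt n \<in> M"
    using eval_exps_in_M by simp
  have "r ^ s n \<in># z" "r ^ s (Suc n) \<notin># z"
    unfolding z_def using numer_gt_1 r_power_inject by auto
  then have "z \<in> R_atom M (betti_elt n) (r ^ s n)" "z \<notin> R_atom M (betti_elt n) (r ^ s (Suc n))"
    using z R_atom_iff[OF r_power_in_atoms[OF s_in_N]] by auto
  then have "R_atom M (betti_elt n) (r ^ s n) \<noteq> R_atom M (betti_elt n) (r ^ s (Suc n))"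
    by blast
  moreover have "R_atom M (betti_elt n) (r ^ s n) \<in> R_classes M (betti_elt n)"
    "R_atom M (betti_elt n) (r ^ s (Suc n)) \<in> R_classes M (betti_elt n)"
    using R_classes_betti_elt by auto
  ultimately show ?thesis
    using \<open>betti_elt n \<in> M\<close> unfolding Betti_def by blast
qed

abbreviation weight :: "nat multiset \<Rightarrow> nat" where
  "weight E \<equiv> \<Sum>t\<in>#E. nat \<alpha> ^ t"

lemma count_top_exponent_ge:
  assumes E: "set_mset E \<subseteq> N" "set_mset E' \<subseteq> N" "eval_exps E = eval_exps E'"
    and top: "s (Suc j) \<in># E" "s (Suc j) \<notin># E'" "\<forall>t\<in>#E + E'. t \<le> s (Suc j)"
  shows "nat \<beta> ^ (s (Suc j) - s j) \<le> count E (s (Suc j))"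
proof -
  define e where "e = s (Suc j)"
  define d where "d = e - s j"
  define c where "c = count E e"
  define E0 where "E0 = filter_mset (\<lambda>t. t \<noteq> e) E"
  have E_split: "E = replicate_mset c e + E0"
    unfolding c_def E0_def using multiset_partition[of E "\<lambda>t. t = e"] filter_eq_replicate_mset[of e E] by simp
  have lower_dvd: "\<beta> ^ d dvd \<alpha> ^ t * \<beta> ^ (e - t)" if "t \<in> N" "t \<le> e" "t \<noteq> e" for t
  proof -
    have "t \<le> s j"
      using that s_gap[of t j] unfolding e_def by auto
    then have "\<beta> ^ d dvd \<beta> ^ (e - t)"
      unfolding d_def by (simp add: le_imp_power_dvd)
    then show ?thesis
      by simp
  qed
  have "of_int (cleared e E) = (of_int (cleared e E') :: rat)"
    using cleared_eq[of E e] cleared_eq[of E' e] E(3) top(3) unfolding e_def by simp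
  then have "cleared e E = cleared e E'"
    by (simp only: of_int_eq_iff)
  then have "of_nat c * \<alpha> ^ e + cleared e E0 = cleared e E'"
    by (subst (asm) E_split) simp
  then have "of_nat c * \<alpha> ^ e = cleared e E' - cleared e E0"
    by linarith
  moreover have "\<beta> ^ d dvd cleared e E0"
  proof (rule dvd_sum_mset_image)
    fix t assume "t \<in># E0"
    then show "\<beta> ^ d dvd \<alpha> ^ t * \<beta> ^ (e - t)"
      using E(1) top(3) lower_dvd e_def unfolding E0_def by auto
  qed
  moreover have "\<beta> ^ d dvd cleared e E'"
  proof (rule dvd_sum_mset_image)
    fix t assume "t \<in># E'"
    then show "\<beta> ^ d dvd \<alpha> ^ t * \<beta> ^ (e - t)"
      using E(2) top(2,3) lower_dvd e_def by auto
  qed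
  ultimately have "\<beta> ^ d dvd of_nat c * \<alpha> ^ e"
    by simp
  moreover have "coprime (\<beta> ^ d) (\<alpha> ^ e)"
    using coprime_\<alpha>_\<beta> by (simp add: coprime_commute)
  ultimately have "\<beta> ^ d dvd int c"
    by (simp add: coprime_dvd_mult_left_iff)
  moreover have "c > 0"
    using top(1) unfolding c_def e_def by simp
  ultimately have "nat (\<beta> ^ d) \<le> c"
    using zdvd_imp_le by fastforce
  then show ?thesis
    using denom_pos[of r] unfolding c_def d_def e_def by (simp add: nat_power_eq)
qed

lemma exchange_top_exponents:
  assumes E: "set_mset E \<subseteq> N" "eval_exps E \<noteq> betti_elt j"
    and top: "replicate_mset (nat \<beta> ^ (s (Suc j) - s j)) (s (Suc j)) \<subseteq># E"
  obtains E1 where "set_mset E1 \<subseteq> N" "eval_exps E1 = eval_exps E" "weight E1 < weight E"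
    "fact_of E \<inter># fact_of E1 \<noteq> {#}"
proof -
  define d where "d = s (Suc j) - s j"
  define R where "R = replicate_mset (nat \<beta> ^ d) (s (Suc j))"
  define Q where "Q = replicate_mset (nat \<alpha> ^ d) (s j)"
  have E_split: "E = (E - R) + R"
    using top unfolding R_def d_def by simp
  have "s (Suc j) = d + s j"
    unfolding d_def by (simp add: less_imp_le)
  have eval_R: "eval_exps R = betti_elt j" and eval_Q: "eval_exps Q = betti_elt j"
    using numer_gt_1 denom_gt_1 betti_elt_eq_denom_power[of j]
    by (simp_all add: R_def Q_def d_def)
  have "weight Q = nat \<alpha> ^ s (Suc j)"
    unfolding Q_def by (simp add: \<open>s (Suc j) = d + s j\<close> power_add)
  moreover have "weight R = nat \<beta> ^ d * nat \<alpha> ^ s (Suc j)"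
    unfolding R_def by simp
  moreover have "1 < nat \<beta> ^ d"
    using denom_gt_1 by (intro one_less_power) (simp_all add: d_def)
  moreover have "0 < nat \<alpha> ^ s (Suc j)"
    using numer_gt_1 by simp
  ultimately have "weight Q < weight R"
    by simp
  have "E - R \<noteq> {#}"
    using E(2) E_split eval_R by force
  then obtain t where "t \<in># E - R"
    by blast
  show ?thesis
  proof
    show "set_mset (E - R + Q) \<subseteq> N"
      using E(1) s_in_N by (auto simp: Q_def dest: in_diffD)
    show "eval_exps (E - R + Q) = eval_exps E"
      using eval_R eval_Q by (subst (2) E_split) simp
    show "weight (E - R + Q) < weight E"
      using \<open>weight Q < weight R\<close> by (subst (2) E_split) simp
    have "r ^ t \<in># fact_of E" "r ^ t \<in># fact_of (E - R + Q)"
      using \<open>t \<in># E - R\<close> by (auto dest: in_diffD)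
    then show "fact_of E \<inter># fact_of (E - R + Q) \<noteq> {#}"
      by (rule inter_mset_nonempty)
  qed
qed

lemma fact_of_in_R_step:
  assumes "set_mset E \<subseteq> N" "set_mset E' \<subseteq> N" "eval_exps E = x" "eval_exps E' = x"
    and "fact_of E \<inter># fact_of E' \<noteq> {#}"
  shows "(fact_of E, fact_of E') \<in> R_step M x"
  using assms unfolding R_step_def factorizations_iff by blast

lemma adjacent_lighter_factorization:
  assumes x: "x \<notin> range betti_elt"
    and E: "set_mset E \<subseteq> N" "set_mset E' \<subseteq> N" "eval_exps E = x" "eval_exps E' = x"
    and top: "e \<in># E" "e \<notin># E'" "\<forall>t\<in>#E + E'. t \<le> e"
  obtains E1 where "set_mset E1 \<subseteq> N" "eval_exps E1 = x" "weight E1 < weight E"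
    "(fact_of E, fact_of E1) \<in> R_step M x"
proof -
  obtain m where "s m = e"
    using s_surj E(1) top(1) by auto
  have "m \<noteq> 0"
  proof
    assume "m = 0"
    then have "E' = {#}"
      using top(2,3) \<open>s m = e\<close> s_0 by (metis le_zero_eq multiset_nonemptyE union_iff)
    moreover have "E \<noteq> {#}"
      using top(1) by auto
    ultimately show False
      using E(3,4) eval_exps_pos[of E] by simp
  qed
  then obtain j where "e = s (Suc j)"
    using \<open>s m = e\<close> not0_implies_Suc by metis
  then have "replicate_mset (nat \<beta> ^ (s (Suc j) - s j)) (s (Suc j)) \<subseteq># E"
    using count_top_exponent_ge[of E E' j] E top by (simp add: count_le_replicate_mset_subset_eq)
  moreover have "eval_exps E \<noteq> betti_elt j"
    using x E(3) by auto
  ultimately obtain E1 where "set_mset E1 \<subseteq> N" "eval_exps E1 = x" "weight E1 < weight E"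
    "fact_of E \<inter># fact_of E1 \<noteq> {#}"
    using exchange_top_exponents[OF E(1)] E(3) by metis
  with E show thesis
    using fact_of_in_R_step that by blast
qed

lemma exponent_factorizations_R_connected:
  assumes "x \<notin> range betti_elt"
  shows "set_mset E \<subseteq> N \<Longrightarrow> set_mset E' \<subseteq> N \<Longrightarrow> eval_exps E = x \<Longrightarrow> eval_exps E' = x
    \<Longrightarrow> (fact_of E, fact_of E') \<in> (R_step M x)\<^sup>*"
proof (induction "weight E + weight E'" arbitrary: E E' rule: less_induct)
  case less
  show ?case
  proof (cases "fact_of E \<inter># fact_of E' = {#}")
    case False
    then show ?thesis
      using fact_of_in_R_step less.prems by blast
  next
    case disjoint: True
    show ?thesis
    proof (cases "E + E' = {#}")
      case True
      then show ?thesis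
        by simp
    next
      case False
      define e where "e = Max (set_mset (E + E'))"
      have top: "e \<in># E + E'" "\<forall>t\<in>#E + E'. t \<le> e"
        using False Max_in[of "set_mset (E + E')"] unfolding e_def by auto
      moreover have "\<not> (e \<in># E \<and> e \<in># E')"
        using disjoint inter_mset_nonempty[of "r ^ e"] by auto
      ultimately consider "e \<in># E" "e \<notin># E'" | "e \<in># E'" "e \<notin># E"
        by auto
      then show ?thesis
      proof cases
        case 1
        obtain E1 where E1: "set_mset E1 \<subseteq> N" "eval_exps E1 = x" "weight E1 < weight E"
          "(fact_of E, fact_of E1) \<in> R_step M x"
          by (rule adjacent_lighter_factorization[OF assms less.prems 1 top(2)])
        then have "(fact_of E1, fact_of E') \<in> (R_step M x)\<^sup>*"
          using less.hyps[of E1 E'] less.prems by simp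
        with E1(4) show ?thesis
          by (rule converse_rtrancl_into_rtrancl)
      next
        case 2
        have "\<forall>t\<in>#E' + E. t \<le> e"
          using top(2) by (simp add: add.commute)
        obtain E1 where E1: "set_mset E1 \<subseteq> N" "eval_exps E1 = x" "weight E1 < weight E'"
          "(fact_of E', fact_of E1) \<in> R_step M x"
          by (rule adjacent_lighter_factorization[OF assms less.prems(2,1,4,3) 2 \<open>\<forall>t\<in>#E' + E. t \<le> e\<close>])
        then have "(fact_of E, fact_of E1) \<in> (R_step M x)\<^sup>*"
          using less.hyps[of E E1] less.prems by simp
        with R_step_sym[OF E1(4)] show ?thesis
          by (rule rtrancl_into_rtrancl[rotated])
      qed
    qed
  qed
qed

lemma Betti_eq: "Betti M = range betti_elt"
proof
  show "Betti M \<subseteq> range betti_elt"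
  proof (rule subsetI, rule ccontr)
    fix x assume "x \<in> Betti M" "x \<notin> range betti_elt"
    then have "(z, w) \<in> (R_step M x)\<^sup>*"
      if "z \<in> factorizations M x" "w \<in> factorizations M x" for z w
      using that exponent_factorizations_R_connected unfolding factorizations_iff by blast
    with \<open>x \<in> Betti M\<close> show False
      using not_Betti_if_R_connected by blast
  qed
qed (use betti_elt_in_Betti in blast)

end

theorem mainTheorem7:
  fixes r :: rat and N :: "nat set"
  assumes "numerical_monoid N"
    and "r > 0"
    and "r \<notin> \<nat>"
    and "numer r > 1"
  shows "Betti (exp_puiseux r N) =
           {of_int (numer r) ^ (enumerate N (Suc n) - enumerate N n) * r ^ (enumerate N n) | n. True}
         \<and> (\<forall>n x. x = of_int (numer r) ^ (enumerate N (Suc n) - enumerate N n) * r ^ (enumerate N n) \<longrightarrow>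
           R_classes (exp_puiseux r N) x =
             {R_atom (exp_puiseux r N) x (r ^ enumerate N n),
              R_atom (exp_puiseux r N) x (r ^ enumerate N (Suc n))})"
proof -
  interpret atomic_exp_puiseux r N
    using assms by unfold_locales
  show ?thesis
    using Betti_eq R_classes_betti_elt by (auto simp: full_SetCompr_eq)
qed

end
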